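(* If $G$ is a partial cube, then $c(G) \geq \left\lceil \frac{\delta(G)}{2} \right\rceil$.
   Context: The $n$-dimensional hypercube $Q_n$ has vertex set $\{0,1\}^n$, two strings being adjacent iff they differ in exactly one position. An induced subgraph $H$ of a graph $G$ is isometric if $d_H(u,v) = d_G(u,v)$ for all $u,v \in V(H)$. A partial cube is a connected graph isomorphic to an isometric subgraph of some hypercube $Q_n$. $\delta(G)$ is the minimum degree of $G$. Cops and Robbers on a finite simple graph $G$: $k$ cops first choose starting vertices, then the robber chooses a starting vertex; thereafter in each round all cops move (each to a neighboring vertex or staying put), then the robber moves (to a neighbor or staying put); all positions are visible to both sides. The cops win if some cop occupies the robber's vertex at some point. The cop number $c(G)$ is the minimum $k$ such that $k$ cops have a strategy guaranteeing capture. *)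

theory Defs
  imports Complex_Main
begin

definition simple_graph :: "'a set \<Rightarrow> ('a \<Rightarrow> 'a \<Rightarrow> bool) \<Rightarrow> bool" where
  "simple_graph V E \<longleftrightarrow> finite V \<and> (\<forall>u v. E u v \<longrightarrow> u \<in> V \<and> v \<in> V)
     \<and> (\<forall>u v. E u v \<longrightarrow> E v u) \<and> (\<forall>v. \<not> E v v)"

definition walk :: "'a set \<Rightarrow> ('a \<Rightarrow> 'a \<Rightarrow> bool) \<Rightarrow> 'a list \<Rightarrow> bool" where
  "walk V E xs \<longleftrightarrow> xs \<noteq> [] \<and> set xs \<subseteq> V \<and> (\<forall>i. Suc i < length xs \<longrightarrow> E (xs ! i) (xs ! Suc i))"

definition connected_graph :: "'a set \<Rightarrow> ('a \<Rightarrow> 'a \<Rightarrow> bool) \<Rightarrow> bool" where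
  "connected_graph V E \<longleftrightarrow> V \<noteq> {} \<and>
     (\<forall>u\<in>V. \<forall>v\<in>V. \<exists>xs. walk V E xs \<and> hd xs = u \<and> last xs = v)"

definition gdist :: "'a set \<Rightarrow> ('a \<Rightarrow> 'a \<Rightarrow> bool) \<Rightarrow> 'a \<Rightarrow> 'a \<Rightarrow> nat" where
  "gdist V E u v = (LEAST n. \<exists>xs. walk V E xs \<and> hd xs = u \<and> last xs = v \<and> length xs = Suc n)"

definition cube_V :: "nat \<Rightarrow> bool list set" where
  "cube_V n = {xs. length xs = n}"

definition cube_E :: "nat \<Rightarrow> bool list \<Rightarrow> bool list \<Rightarrow> bool" where
  "cube_E n xs ys \<longleftrightarrow> length xs = n \<and> length ys = n \<and>
     card {i. i < n \<and> xs ! i \<noteq> ys ! i} = 1"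

definition induced_E :: "('a \<Rightarrow> 'a \<Rightarrow> bool) \<Rightarrow> 'a set \<Rightarrow> 'a \<Rightarrow> 'a \<Rightarrow> bool" where
  "induced_E E S u v \<longleftrightarrow> u \<in> S \<and> v \<in> S \<and> E u v"

definition isometric_subgraph :: "'a set \<Rightarrow> 'a set \<Rightarrow> ('a \<Rightarrow> 'a \<Rightarrow> bool) \<Rightarrow> bool" where
  "isometric_subgraph S V E \<longleftrightarrow> S \<subseteq> V \<and>
     (\<forall>u\<in>S. \<forall>v\<in>S. gdist S (induced_E E S) u v = gdist V E u v)"

definition graph_iso :: "('a \<Rightarrow> 'b) \<Rightarrow> 'a set \<Rightarrow> ('a \<Rightarrow> 'a \<Rightarrow> bool) \<Rightarrow> 'b set \<Rightarrow> ('b \<Rightarrow> 'b \<Rightarrow> bool) \<Rightarrow> bool" where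
  "graph_iso f V E W F \<longleftrightarrow> bij_betw f V W \<and> (\<forall>u\<in>V. \<forall>v\<in>V. E u v \<longleftrightarrow> F (f u) (f v))"

definition partial_cube :: "'a set \<Rightarrow> ('a \<Rightarrow> 'a \<Rightarrow> bool) \<Rightarrow> bool" where
  "partial_cube V E \<longleftrightarrow> connected_graph V E \<and>
     (\<exists>n S f. isometric_subgraph S (cube_V n) (cube_E n) \<and>
              graph_iso f V E S (induced_E (cube_E n) S))"

definition degree :: "'a set \<Rightarrow> ('a \<Rightarrow> 'a \<Rightarrow> bool) \<Rightarrow> 'a \<Rightarrow> nat" where
  "degree V E v = card {w \<in> V. E v w}"

definition min_degree :: "'a set \<Rightarrow> ('a \<Rightarrow> 'a \<Rightarrow> bool) \<Rightarrow> nat" where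
  "min_degree V E = Min (degree V E ` V)"

text \<open>A play: C t i is the position of cop i after the cops' move in round t
  (C 0 = initial placement), R t is the robber position after his move in round t
  (R 0 = robber's initial choice).  Cop strategy: initial placement c0 and
  a function sigma from the robber history [R 0, ..., R t] to the cops' positions
  in round t+1 (the cops' own earlier positions are determined by the strategy).\<close>

definition step :: "'a set \<Rightarrow> ('a \<Rightarrow> 'a \<Rightarrow> bool) \<Rightarrow> 'a \<Rightarrow> 'a \<Rightarrow> bool" where
  "step V E x y \<longleftrightarrow> x \<in> V \<and> (y = x \<or> E x y)"

fun cop_pos :: "('a \<Rightarrow> 'a \<Rightarrow> bool) \<Rightarrow> (nat \<Rightarrow> 'a) \<Rightarrow> ('a list \<Rightarrow> nat \<Rightarrow> 'a) \<Rightarrow> (nat \<Rightarrow> 'a) \<Rightarrow> nat \<Rightarrow> nat \<Rightarrow> 'a" where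
  "cop_pos E c0 \<sigma> R 0 = c0"
| "cop_pos E c0 \<sigma> R (Suc t) = \<sigma> (map R [0..<Suc t])"

definition robber_legal :: "'a set \<Rightarrow> ('a \<Rightarrow> 'a \<Rightarrow> bool) \<Rightarrow> (nat \<Rightarrow> 'a) \<Rightarrow> bool" where
  "robber_legal V E R \<longleftrightarrow> R 0 \<in> V \<and> (\<forall>t. step V E (R t) (R (Suc t)))"

definition cops_winning_strategy ::
  "'a set \<Rightarrow> ('a \<Rightarrow> 'a \<Rightarrow> bool) \<Rightarrow> nat \<Rightarrow> (nat \<Rightarrow> 'a) \<Rightarrow> ('a list \<Rightarrow> nat \<Rightarrow> 'a) \<Rightarrow> bool" where
  "cops_winning_strategy V E k c0 \<sigma> \<longleftrightarrow>
     (\<forall>i<k. c0 i \<in> V) \<and>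
     (\<forall>R. robber_legal V E R \<longrightarrow>
        (\<forall>t. \<forall>i<k. step V E (cop_pos E c0 \<sigma> R t i) (cop_pos E c0 \<sigma> R (Suc t) i)) \<and>
        (\<exists>t. \<exists>i<k. cop_pos E c0 \<sigma> R t i = R t \<or> cop_pos E c0 \<sigma> R (Suc t) i = R t))"

definition cops_win :: "'a set \<Rightarrow> ('a \<Rightarrow> 'a \<Rightarrow> bool) \<Rightarrow> nat \<Rightarrow> bool" where
  "cops_win V E k \<longleftrightarrow> (\<exists>c0 \<sigma>. cops_winning_strategy V E k c0 \<sigma>)"

definition cop_number :: "'a set \<Rightarrow> ('a \<Rightarrow> 'a \<Rightarrow> bool) \<Rightarrow> nat" where
  "cop_number V E = (LEAST k. cops_win V E k)"

end

theory Submission imports Defs begin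

text \<open>In the hypercube two distinct vertices have at most two common neighbours and no
  triangle exists, so for distinct x, c at most two neighbours of x lie in the closed
  neighbourhood of c. A robber standing on an unoccupied vertex of degree greater than 2k
  can therefore always step to a neighbour that is neither occupied by nor adjacent to
  any of the k cops; the cops then never reach him.\<close>

definition cube_diff :: "nat \<Rightarrow> bool list \<Rightarrow> bool list \<Rightarrow> nat set" where
  "cube_diff n X Y = {i. i < n \<and> X ! i \<noteq> Y ! i}"

lemma cube_E_iff_cube_diff_singleton:
  "cube_E n X Y \<longleftrightarrow> length X = n \<and> length Y = n \<and> (\<exists>i. cube_diff n X Y = {i})"
  unfolding cube_E_def cube_diff_def by (simp add: card_1_singleton_iff)

lemma cube_diff_less: "i \<in> cube_diff n X Y \<Longrightarrow> i < n"
  unfolding cube_diff_def by simp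

lemma mem_cube_diff_trans_iff:
  "i \<in> cube_diff n X Z \<longleftrightarrow> i < n \<and> ((i \<in> cube_diff n X Y) \<noteq> (i \<in> cube_diff n Y Z))"
  unfolding cube_diff_def by auto

lemma inj_on_cube_diff: "inj_on (cube_diff n X) {Y. length Y = n}"
proof
  fix Y Y' assume "Y \<in> {Y. length Y = n}" "Y' \<in> {Y. length Y = n}"
    and eq: "cube_diff n X Y = cube_diff n X Y'"
  then show "Y = Y'"
    by (intro nth_equalityI) (auto simp: set_eq_iff cube_diff_def)
qed

lemma cube_triangle_free: "cube_E n X Y \<Longrightarrow> cube_E n Y Z \<Longrightarrow> \<not> cube_E n X Z"
proof
  assume "cube_E n X Y" "cube_E n Y Z" "cube_E n X Z"
  then obtain i j l where i: "cube_diff n X Y = {i}" and j: "cube_diff n Y Z = {j}"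
    and l: "cube_diff n X Z = {l}"
    by (metis cube_E_iff_cube_diff_singleton)
  have "i < n" "j < n" "l < n" using i j l cube_diff_less by blast+
  then show False
    using mem_cube_diff_trans_iff[of _ n X Z Y] i j l by (metis insert_iff singleton_iff)
qed

lemma cube_common_neighbour_coordinate:
  assumes "X \<noteq> Z" "cube_E n X Y" "cube_E n Y Z"
  obtains i where "cube_diff n X Y = {i}" "i \<in> cube_diff n X Z"
proof -
  obtain i j where i: "cube_diff n X Y = {i}" and j: "cube_diff n Y Z = {j}"
    using assms(2,3) by (metis cube_E_iff_cube_diff_singleton)
  have "i < n" using i cube_diff_less by blast
  have "i \<noteq> j"
  proof
    assume "i = j"
    then have "cube_diff n X Z = {}"
      using mem_cube_diff_trans_iff[of _ n X Z Y] i j by auto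
    moreover have "length X = n" "length Z = n"
      using assms(2,3) cube_E_iff_cube_diff_singleton by blast+
    ultimately show False
      using assms(1) by (auto intro: nth_equalityI simp: cube_diff_def)
  qed
  then have "i \<in> cube_diff n X Z"
    using mem_cube_diff_trans_iff[of i n X Z Y] i j \<open>i < n\<close> by auto
  with i that show thesis by blast
qed

lemma card_cube_common_closed_neighbours_le_2:
  assumes "X \<noteq> Z"
  shows "card {Y. cube_E n X Y \<and> (Y = Z \<or> cube_E n Y Z)} \<le> 2"
proof (cases "cube_E n X Z")
  case True
  then have "{Y. cube_E n X Y \<and> (Y = Z \<or> cube_E n Y Z)} \<subseteq> {Z}"
    using cube_triangle_free by blast
  then have "card {Y. cube_E n X Y \<and> (Y = Z \<or> cube_E n Y Z)} \<le> card {Z}"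
    by (rule card_mono[rotated]) simp
  then show ?thesis by simp
next
  case False
  let ?T = "{Y. cube_E n X Y \<and> cube_E n Y Z}"
  have "card ?T \<le> 2"
  proof (cases "?T = {}")
    case False
    then obtain Y0 where "cube_E n X Y0" "cube_E n Y0 Z" by blast
    then obtain i0 j0 where i0: "cube_diff n X Y0 = {i0}" and j0: "cube_diff n Y0 Z = {j0}"
      by (metis cube_E_iff_cube_diff_singleton)
    have diff_sub: "cube_diff n X Z \<subseteq> {i0, j0}"
      using mem_cube_diff_trans_iff[of _ n X Z Y0] i0 j0 by auto
    have fin: "finite (cube_diff n X Z)"
      using diff_sub by (rule finite_subset) simp
    have img_sub: "cube_diff n X ` ?T \<subseteq> (\<lambda>i. {i}) ` cube_diff n X Z"
    proof
      fix D assume "D \<in> cube_diff n X ` ?T"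
      then obtain Y where "cube_E n X Y" "cube_E n Y Z" "D = cube_diff n X Y" by blast
      then show "D \<in> (\<lambda>i. {i}) ` cube_diff n X Z"
        using cube_common_neighbour_coordinate[OF assms] by (metis image_eqI)
    qed
    have "inj_on (cube_diff n X) ?T"
      by (rule inj_on_subset[OF inj_on_cube_diff]) (auto simp: cube_E_def)
    then have "card ?T = card (cube_diff n X ` ?T)"
      by (simp add: card_image)
    also have "\<dots> \<le> card ((\<lambda>i. {i}) ` cube_diff n X Z)"
      using img_sub fin by (intro card_mono) simp_all
    also have "\<dots> \<le> card (cube_diff n X Z)"
      by (rule card_image_le[OF fin])
    also have "\<dots> \<le> card {i0, j0}"
      by (rule card_mono[OF _ diff_sub]) simp
    also have "\<dots> \<le> 2"
      by (simp add: card_insert_if)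
    finally show ?thesis .
  qed (metis card.empty zero_le)
  moreover have "{Y. cube_E n X Y \<and> (Y = Z \<or> cube_E n Y Z)} = ?T"
    using False by auto
  ultimately show ?thesis by simp
qed

lemma card_common_closed_neighbours_le_2_if_cube_embedding:
  assumes edges: "\<And>u v. E u v \<Longrightarrow> u \<in> V \<and> v \<in> V"
    and iso: "graph_iso f V E S (induced_E (cube_E n) S)"
    and "x \<in> V" "c \<noteq> x"
  shows "card {v. E x v \<and> (v = c \<or> E v c)} \<le> 2"
proof (cases "c \<in> V")
  case False
  then have "{v. E x v \<and> (v = c \<or> E v c)} = {}" using edges by blast
  then show ?thesis by (metis card.empty zero_le)
next
  case True
  let ?A = "{v. E x v \<and> (v = c \<or> E v c)}"
  have inj: "inj_on f V" and
    E_iff: "\<And>u v. u \<in> V \<Longrightarrow> v \<in> V \<Longrightarrow> E u v \<longleftrightarrow> induced_E (cube_E n) S (f u) (f v)"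
    using iso unfolding graph_iso_def bij_betw_def by auto
  have "f x \<noteq> f c"
    using inj_onD[OF inj] \<open>x \<in> V\<close> True \<open>c \<noteq> x\<close> by metis
  have A_sub: "?A \<subseteq> V" using edges by blast
  let ?B = "{Y. cube_E n (f x) Y \<and> (Y = f c \<or> cube_E n Y (f c))}"
  have "f ` ?A \<subseteq> ?B"
  proof
    fix y assume "y \<in> f ` ?A"
    then obtain v where v: "v \<in> ?A" "y = f v" by blast
    with A_sub E_iff[of x v] E_iff[of v c] \<open>x \<in> V\<close> True show "y \<in> ?B"
      unfolding induced_E_def by auto
  qed
  moreover have "finite ?B"
  proof (rule finite_subset)
    show "?B \<subseteq> {xs. set xs \<subseteq> UNIV \<and> length xs = n}"
      by (auto simp: cube_E_def)
    show "finite {xs :: bool list. set xs \<subseteq> UNIV \<and> length xs = n}"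
      by (rule finite_lists_length_eq) simp
  qed
  ultimately have "card (f ` ?A) \<le> card ?B"
    by (rule card_mono[rotated])
  also have "\<dots> \<le> 2"
    by (rule card_cube_common_closed_neighbours_le_2[OF \<open>f x \<noteq> f c\<close>])
  finally have "card (f ` ?A) \<le> 2" .
  moreover have "card (f ` ?A) = card ?A"
    using inj_on_subset[OF inj A_sub] by (rule card_image)
  ultimately show ?thesis by simp
qed

definition out_of_reach :: "('a \<Rightarrow> 'a \<Rightarrow> bool) \<Rightarrow> nat \<Rightarrow> (nat \<Rightarrow> 'a) \<Rightarrow> 'a \<Rightarrow> bool" where
  "out_of_reach E k P y \<longleftrightarrow> (\<forall>i<k. P i \<noteq> y \<and> \<not> E y (P i))"

lemma exists_out_of_reach_neighbour:
  assumes "finite V" and edges: "\<And>u v. E u v \<Longrightarrow> u \<in> V \<and> v \<in> V"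
    and common: "\<And>c. c \<noteq> x \<Longrightarrow> card {v. E x v \<and> (v = c \<or> E v c)} \<le> 2"
    and unoccupied: "\<forall>i<k. P i \<noteq> x" and deg: "2 * k < degree V E x"
  shows "\<exists>v. E x v \<and> out_of_reach E k P v"
proof (rule ccontr)
  let ?N = "\<lambda>i. {v. E x v \<and> (v = P i \<or> E v (P i))}"
  assume "\<not> ?thesis"
  then have "{w \<in> V. E x w} \<subseteq> (\<Union>i<k. ?N i)"
    unfolding out_of_reach_def by blast
  moreover have "(\<Union>i<k. ?N i) \<subseteq> V" using edges by blast
  ultimately have "degree V E x \<le> card (\<Union>i<k. ?N i)"
    unfolding degree_def using \<open>finite V\<close> by (meson card_mono finite_subset)
  also have "\<dots> \<le> (\<Sum>i<k. card (?N i))"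
    by (rule card_UN_le) simp
  also have "\<dots> \<le> (\<Sum>i<k. 2)"
    using common unoccupied by (intro sum_mono) auto
  finally show False using deg by simp
qed

fun robber_history ::
  "('a \<Rightarrow> (nat \<Rightarrow> 'a) \<Rightarrow> 'a) \<Rightarrow> ('a list \<Rightarrow> nat \<Rightarrow> 'a) \<Rightarrow> 'a \<Rightarrow> nat \<Rightarrow> 'a list" where
  "robber_history g \<sigma> r0 0 = [r0]"
| "robber_history g \<sigma> r0 (Suc t) =
     robber_history g \<sigma> r0 t @ [g (last (robber_history g \<sigma> r0 t)) (\<sigma> (robber_history g \<sigma> r0 t))]"

lemma length_robber_history: "length (robber_history g \<sigma> r0 t) = Suc t"
  by (induction t) auto

lemma nth_robber_history_mono:
  "t \<le> t' \<Longrightarrow> j \<le> t \<Longrightarrow> robber_history g \<sigma> r0 t' ! j = robber_history g \<sigma> r0 t ! j"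
  by (induction t' rule: dec_induct) (auto simp: nth_append length_robber_history)

lemma reactive_robber_play_exists:
  fixes g :: "'a \<Rightarrow> (nat \<Rightarrow> 'a) \<Rightarrow> 'a" and \<sigma> :: "'a list \<Rightarrow> nat \<Rightarrow> 'a"
  shows "\<exists>R. R 0 = r0 \<and> (\<forall>t. R (Suc t) = g (R t) (\<sigma> (map R [0..<Suc t])))"
proof -
  define R where "R t = robber_history g \<sigma> r0 t ! t" for t
  have hist: "map R [0..<Suc t] = robber_history g \<sigma> r0 t" for t
  proof (rule nth_equalityI)
    fix j assume "j < length (map R [0..<Suc t])"
    then show "map R [0..<Suc t] ! j = robber_history g \<sigma> r0 t ! j"
      using nth_robber_history_mono[of j t j g \<sigma> r0] by (simp add: R_def del: upt_Suc)
  qed (simp add: length_robber_history)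
  have "last (robber_history g \<sigma> r0 t) = R t" for t
    unfolding R_def using length_robber_history[of g \<sigma> r0 t]
    by (metis diff_Suc_1 last_conv_nth list.size(3) nat.distinct(1))
  then have "R (Suc t) = g (R t) (\<sigma> (map R [0..<Suc t]))" for t
    unfolding hist by (simp add: R_def nth_append length_robber_history)
  moreover have "R 0 = r0" by (simp add: R_def)
  ultimately show ?thesis by blast
qed

lemma cop_not_on_robber_after_move:
  assumes sym: "\<And>u v. E u v \<Longrightarrow> E v u" and "out_of_reach E k P y"
    and "\<forall>i<k. step V E (P i) (P' i)"
  shows "\<forall>i<k. P' i \<noteq> y"
  using assms unfolding out_of_reach_def step_def by metis

lemma not_cops_win_if_robber_can_escape:
  assumes sym: "\<And>u v. E u v \<Longrightarrow> E v u" and edges: "\<And>u v. E u v \<Longrightarrow> u \<in> V \<and> v \<in> V"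
    and "finite V" "k < card V"
    and escape: "\<And>x P. x \<in> V \<Longrightarrow> \<forall>i<k. P i \<noteq> x \<Longrightarrow> \<exists>v. E x v \<and> out_of_reach E k P v"
  shows "\<not> cops_win V E k"
proof
  assume "cops_win V E k"
  then obtain c0 \<sigma> where W: "cops_winning_strategy V E k c0 \<sigma>"
    unfolding cops_win_def by blast
  have "card (c0 ` {..<k}) < card V"
    using card_image_le[of "{..<k}" c0] \<open>k < card V\<close> by simp
  then have "\<not> V \<subseteq> c0 ` {..<k}"
    using card_mono[of "c0 ` {..<k}" V] by (meson finite_imageI finite_lessThan not_le)
  then obtain x where x: "x \<in> V" "\<forall>i<k. c0 i \<noteq> x"
    by blast
  define good where "good y P v \<longleftrightarrow> E y v \<and> out_of_reach E k P v" for y P v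
  \<comment> \<open>Staying put as a fallback makes the play legal before anything is known about the cops' moves.\<close>
  define g where "g y P = (if \<exists>v. good y P v then SOME v. good y P v else y)" for y P
  have g_good: "good y P (g y P)" if "\<exists>v. good y P v" for y P
    using someI_ex[OF that] that unfolding g_def by simp
  have g_step: "step V E y (g y P)" if "y \<in> V" for y P
  proof (cases "\<exists>v. good y P v")
    case True
    then show ?thesis using g_good[OF True] that unfolding step_def good_def by blast
  next
    case False
    then have "g y P = y" unfolding g_def by (rule if_not_P)
    then show ?thesis using that unfolding step_def by simp
  qed
  have g_escapes: "good y P (g y P)" if "y \<in> V" "\<forall>i<k. P i \<noteq> y" for y P
    using g_good escape[OF that] unfolding good_def by blast
  obtain R where R0: "R 0 = g x c0"
    and RS: "\<And>t. R (Suc t) = g (R t) (cop_pos E c0 \<sigma> R (Suc t))"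
    using reactive_robber_play_exists[of "g x c0" g \<sigma>] by auto
  let ?C = "cop_pos E c0 \<sigma> R"
  have RV: "R t \<in> V" for t
  proof (induction t)
    case 0 show ?case using R0 g_escapes[OF x] edges unfolding good_def by metis
  next
    case (Suc t) then show ?case using g_step[OF Suc] RS edges unfolding step_def by metis
  qed
  have "robber_legal V E R"
    unfolding robber_legal_def using RV g_step RS by simp
  then have play: "(\<forall>t. \<forall>i<k. step V E (?C t i) (?C (Suc t) i))
      \<and> (\<exists>t. \<exists>i<k. ?C t i = R t \<or> ?C (Suc t) i = R t)"
    using W unfolding cops_winning_strategy_def by blast
  then have cops_step: "\<forall>i<k. step V E (?C t i) (?C (Suc t) i)" for t
    by blast
  have safe: "out_of_reach E k (?C t) (R t)" for t
  proof (induction t)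
    case 0 show ?case using g_escapes[OF x] R0 unfolding good_def by simp
  next
    case (Suc t)
    have "\<forall>i<k. ?C (Suc t) i \<noteq> R t"
      using cop_not_on_robber_after_move[OF sym Suc cops_step] .
    then show ?case using g_escapes[OF RV] RS unfolding good_def by metis
  qed
  show False
    using play safe cop_not_on_robber_after_move[OF sym safe cops_step]
    unfolding out_of_reach_def by blast
qed

lemma partial_cube_not_cops_win:
  assumes sg: "simple_graph V E" and pc: "partial_cube V E" and k: "2 * k < min_degree V E"
  shows "\<not> cops_win V E k"
proof -
  have "finite V" and sym: "\<And>u v. E u v \<Longrightarrow> E v u"
    and edges: "\<And>u v. E u v \<Longrightarrow> u \<in> V \<and> v \<in> V"
    using sg unfolding simple_graph_def by blast+
  obtain n S f where iso: "graph_iso f V E S (induced_E (cube_E n) S)"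
    using pc unfolding partial_cube_def by blast
  have deg: "2 * k < degree V E x" if "x \<in> V" for x
  proof -
    have "min_degree V E \<le> degree V E x"
      unfolding min_degree_def using \<open>finite V\<close> that by (intro Min_le) auto
    then show ?thesis using k by simp
  qed
  obtain x0 where "x0 \<in> V"
    using pc unfolding partial_cube_def connected_graph_def by blast
  have "degree V E x0 \<le> card V"
    unfolding degree_def using \<open>finite V\<close> by (intro card_mono) auto
  then have "k < card V" using deg[OF \<open>x0 \<in> V\<close>] by simp
  have "\<exists>v. E x v \<and> out_of_reach E k P v" if "x \<in> V" "\<forall>i<k. P i \<noteq> x" for x P
    using exists_out_of_reach_neighbour[where E = E and V = V, OF \<open>finite V\<close> edges _ that(2)]
      card_common_closed_neighbours_le_2_if_cube_embedding[where E = E and V = V, OF edges iso that(1)]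
      deg[OF that(1)]
    by blast
  then show ?thesis
    using not_cops_win_if_robber_can_escape[where E = E and V = V, OF sym edges \<open>finite V\<close> \<open>k < card V\<close>]
    by blast
qed

lemma cops_win_card:
  assumes "finite V" shows "cops_win V E (card V)"
proof -
  obtain h where h: "bij_betw h {..<card V} V"
    using ex_bij_betw_nat_finite[OF assms] atLeast0LessThan by metis
  then have hV: "h ` {..<card V} = V" by (simp add: bij_betw_def)
  have "cop_pos E h (\<lambda>_. h) R t = h" for R t by (cases t) simp_all
  then have "cops_winning_strategy V E (card V) h (\<lambda>_. h)"
    unfolding cops_winning_strategy_def robber_legal_def step_def using hV by (metis image_iff lessThan_iff)
  then show ?thesis unfolding cops_win_def by blast
qed

theorem theorem3p2:
  fixes V :: "'a set" and E :: "'a \<Rightarrow> 'a \<Rightarrow> bool"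
  assumes "simple_graph V E"
    and "partial_cube V E"
  shows "of_nat (cop_number V E) \<ge> \<lceil>real (min_degree V E) / 2\<rceil>"
proof -
  have "finite V" using assms(1) unfolding simple_graph_def by blast
  then have "cops_win V E (cop_number V E)"
    unfolding cop_number_def by (rule LeastI[of "cops_win V E", OF cops_win_card])
  then have "\<not> 2 * cop_number V E < min_degree V E"
    using partial_cube_not_cops_win[OF assms] by blast
  then have "real (min_degree V E) / 2 \<le> real (cop_number V E)" by linarith
  then show ?thesis by (simp add: ceiling_le_iff)
qed

end
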